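(* Let $G=(C,D,E)$ be a finite bipartite graph with left vertex set $C$, right vertex set $D$, and edge set $E\subseteq C\times D$. Then there exist $a,b\in\mathbb{N}$ with $b\le a$ such that $G$ is isomorphic to an induced subgraph of $B_{a,b}$.
   Context: For $n\in\mathbb{N}$, $[n]=\{1,\dots,n\}$, and for a set $X$, $\binom{X}{k}$ denotes the set of $k$-element subsets of $X$. For $k\le n$, $B_{n,k}$ is the bipartite graph with left vertex set $[n]$, right vertex set $\binom{[n]}{k}$, and edge set $\{(x,X)\in[n]\times\binom{[n]}{k} : x\in X\}$. For a graph $H=(V,E)$ and $V'\subseteq V$, the induced subgraph on $V'$ has vertex set $V'$ and edge set consisting of all edges of $H$ with both endpoints in $V'$. *)

theory Defs
  imports Main
begin

type_synonym ('a, 'b) bigraph = "'a set \<times> 'b set \<times> ('a \<times> 'b) set"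

definition bipartite_graph :: "('a, 'b) bigraph \<Rightarrow> bool" where
  "bipartite_graph G = (case G of (C, D, E) \<Rightarrow> E \<subseteq> C \<times> D)"

definition ksubsets :: "nat \<Rightarrow> nat \<Rightarrow> nat set set" where
  "ksubsets n k = {X. X \<subseteq> {1..n} \<and> card X = k}"

definition B_graph :: "nat \<Rightarrow> nat \<Rightarrow> (nat, nat set) bigraph" where
  "B_graph n k = ({1..n}, ksubsets n k,
     {(x, X). x \<in> {1..n} \<and> X \<in> ksubsets n k \<and> x \<in> X})"

definition induced_sub :: "('a, 'b) bigraph \<Rightarrow> 'a set \<Rightarrow> 'b set \<Rightarrow> ('a, 'b) bigraph" where
  "induced_sub G L' R' = (case G of (C, D, E) \<Rightarrow> (L', R', E \<inter> (L' \<times> R')))"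

definition is_induced_sub :: "('a, 'b) bigraph \<Rightarrow> ('a, 'b) bigraph \<Rightarrow> bool" where
  "is_induced_sub H G = (case G of (C, D, E) \<Rightarrow>
     (\<exists>L' R'. L' \<subseteq> C \<and> R' \<subseteq> D \<and> H = induced_sub G L' R'))"

definition bigraph_iso :: "('a, 'b) bigraph \<Rightarrow> ('c, 'd) bigraph \<Rightarrow> bool" where
  "bigraph_iso G H = (case G of (C, D, E) \<Rightarrow> case H of (C', D', E') \<Rightarrow>
     (\<exists>f g. bij_betw f C C' \<and> bij_betw g D D' \<and>
        (\<forall>x\<in>C. \<forall>y\<in>D. (x, y) \<in> E \<longleftrightarrow> (f x, g y) \<in> E')))"

end

theory Submission
  imports Defs
begin

text \<open>Number the left vertices \<open>1, \<dots>, n\<close> and the right vertices \<open>0, \<dots>, m - 1\<close>, and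
  send the right vertex \<open>j\<close> to its neighbourhood padded up to \<open>n + 1\<close> elements with the top
  of the private block \<open>[(j + 1)(n + 1), (j + 2)(n + 1))\<close>. The padding avoids \<open>{1..n}\<close>, so
  adjacency is preserved, and the maximum of the padded set is \<open>(j + 2)(n + 1) - 1\<close>, so distinct
  right vertices get distinct sets. This embeds the graph into \<open>B((m + 1)(n + 1), n + 1)\<close>.\<close>

lemma iso_induced_sub_B_graphI:
  assumes f: "inj_on f C" "f ` C \<subseteq> {1..a}"
    and g: "inj_on g D" "g ` D \<subseteq> ksubsets a b"
    and adj: "\<And>x y. x \<in> C \<Longrightarrow> y \<in> D \<Longrightarrow> (x, y) \<in> E \<longleftrightarrow> f x \<in> g y"
  shows "\<exists>H. is_induced_sub H (B_graph a b) \<and> bigraph_iso (C, D, E) H"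
proof (intro exI conjI)
  let ?H = "induced_sub (B_graph a b) (f ` C) (g ` D)"
  show "is_induced_sub ?H (B_graph a b)"
    using f(2) g(2) unfolding is_induced_sub_def B_graph_def by auto
  have "(x, y) \<in> E \<longleftrightarrow> (f x, g y) \<in> snd (snd ?H)" if "x \<in> C" "y \<in> D" for x y
    using that adj f(2) g(2) by (auto simp: induced_sub_def B_graph_def)
  moreover have "bij_betw f C (f ` C)" "bij_betw g D (g ` D)"
    using f(1) g(1) by (simp_all add: inj_on_imp_bij_betw)
  ultimately show "bigraph_iso (C, D, E) ?H"
    unfolding bigraph_iso_def by (auto simp: induced_sub_def B_graph_def)
qed

definition pad :: "nat \<Rightarrow> nat \<Rightarrow> nat set \<Rightarrow> nat set" where
  "pad n j S = S \<union> {(j + 1) * (n + 1) + card S ..< (j + 2) * (n + 1)}"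

lemma pad_inter_atLeastAtMost:
  assumes "S \<subseteq> {1..n}"
  shows "pad n j S \<inter> {1..n} = S"
  using assms unfolding pad_def by auto

lemma card_pad:
  assumes "S \<subseteq> {1..n}"
  shows "card (pad n j S) = n + 1"
proof -
  have "card S \<le> n"
    using card_mono[OF _ assms] by simp
  moreover have "S \<inter> {(j + 1) * (n + 1) + card S ..< (j + 2) * (n + 1)} = {}"
    using assms by auto
  ultimately show ?thesis
    unfolding pad_def using assms
    by (subst card_Un_disjoint) (auto dest: finite_subset)
qed

lemma pad_subset_atLeastAtMost:
  assumes "S \<subseteq> {1..n}" and "j < m"
  shows "pad n j S \<subseteq> {1..(m + 1) * (n + 1)}"
proof -
  have "(j + 2) * (n + 1) \<le> (m + 1) * (n + 1)"
    using assms(2) by (intro mult_right_mono) auto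
  then show ?thesis
    using assms(1) unfolding pad_def by auto
qed

lemma Max_pad:
  assumes "S \<subseteq> {1..n}"
  shows "Max (pad n j S) = (j + 2) * (n + 1) - 1"
proof (rule Max_eqI)
  show "finite (pad n j S)"
    using assms unfolding pad_def by (auto dest: finite_subset)
  have "card S \<le> n"
    using card_mono[OF _ assms] by simp
  then show "(j + 2) * (n + 1) - 1 \<in> pad n j S"
    unfolding pad_def by auto
  show "x \<le> (j + 2) * (n + 1) - 1" if "x \<in> pad n j S" for x
    using that assms unfolding pad_def by auto
qed

lemma pad_eq_imp_eq:
  assumes "S \<subseteq> {1..n}" and "S' \<subseteq> {1..n}" and "pad n j S = pad n j' S'"
  shows "j = j'"
proof -
  have "(j + 2) * (n + 1) - 1 = (j' + 2) * (n + 1) - 1"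
    using assms by (metis Max_pad)
  then have "(j + 2) * (n + 1) = (j' + 2) * (n + 1)"
    by simp
  then show ?thesis
    using mult_right_cancel[of "n + 1" "j + 2" "j' + 2"] by simp
qed

lemma inj_on_pad:
  assumes "inj_on h D" and "\<And>y. y \<in> D \<Longrightarrow> N y \<subseteq> {1..n}"
  shows "inj_on (\<lambda>y. pad n (h y) (N y)) D"
proof (rule inj_onI)
  fix y y' assume y: "y \<in> D" "y' \<in> D" and "pad n (h y) (N y) = pad n (h y') (N y')"
  then have "h y = h y'"
    using pad_eq_imp_eq assms(2) by blast
  with assms(1) show "y = y'"
    using y by (rule inj_onD)
qed

lemma iso_induced_sub_B_graph_by_padding:
  assumes f: "inj_on f C" "f ` C \<subseteq> {1..n}"
    and h: "inj_on h D" "h ` D \<subseteq> {..<m}"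
  shows "\<exists>H. is_induced_sub H (B_graph ((m + 1) * (n + 1)) (n + 1)) \<and> bigraph_iso (C, D, E) H"
proof (rule iso_induced_sub_B_graphI)
  define N where "N y = f ` {x \<in> C. (x, y) \<in> E}" for y
  have N: "N y \<subseteq> {1..n}" for y
    using f(2) unfolding N_def by auto
  show "inj_on f C"
    by (fact f(1))
  show "f ` C \<subseteq> {1..(m + 1) * (n + 1)}"
    using f(2) by (auto simp: subset_iff)
  show "inj_on (\<lambda>y. pad n (h y) (N y)) D"
    using h(1) N by (rule inj_on_pad)
  show "(\<lambda>y. pad n (h y) (N y)) ` D \<subseteq> ksubsets ((m + 1) * (n + 1)) (n + 1)"
  proof (rule image_subsetI)
    fix y assume "y \<in> D"
    then have "h y < m"
      using h(2) by auto
    then show "pad n (h y) (N y) \<in> ksubsets ((m + 1) * (n + 1)) (n + 1)"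
      unfolding ksubsets_def using pad_subset_atLeastAtMost[OF N] card_pad[OF N] by simp
  qed
  show "(x, y) \<in> E \<longleftrightarrow> f x \<in> pad n (h y) (N y)" if "x \<in> C" "y \<in> D" for x y
  proof -
    have "f x \<in> pad n (h y) (N y) \<longleftrightarrow> f x \<in> N y"
      using f(2) that(1) pad_inter_atLeastAtMost[OF N] by blast
    also have "\<dots> \<longleftrightarrow> (x, y) \<in> E"
      unfolding N_def using inj_on_image_mem_iff[OF f(1) that(1) Collect_restrict] that(1) by simp
    finally show ?thesis ..
  qed
qed

theorem mainTheorem5:
  fixes C :: "'a set" and D :: "'b set" and E :: "('a \<times> 'b) set"
  assumes "finite C" and "finite D" and "bipartite_graph (C, D, E)"
  shows "\<exists>a b :: nat. b \<le> a \<and>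
           (\<exists>H. is_induced_sub H (B_graph a b) \<and> bigraph_iso (C, D, E) H)"
proof -
  obtain f where f: "bij_betw f C {1..card C}"
    using ex_bij_betw_nat_finite_1[OF assms(1)] bij_betw_inv by blast
  obtain h where h: "bij_betw h D {..<card D}"
    using ex_bij_betw_finite_nat[OF assms(2)] atLeast0LessThan by metis
  have "\<exists>H. is_induced_sub H (B_graph ((card D + 1) * (card C + 1)) (card C + 1)) \<and>
      bigraph_iso (C, D, E) H"
    using f h by (intro iso_induced_sub_B_graph_by_padding) (auto simp: bij_betw_def)
  moreover have "card C + 1 \<le> (card D + 1) * (card C + 1)"
    by simp
  ultimately show ?thesis
    by blast
qed

end
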